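(* The map $\langle\cdot,\cdot\rangle\mapsto(\langle e_p,e_p\rangle)_{p\in\mathbb{Z}}$ defines a bijection of cones from $\mathcal{C}$ to $\mathcal{T}$, carrying $\mathcal{C}^+$ onto $\mathcal{T}^+$.
   Context: $\mathcal{S}$ is the space of rapidly decreasing complex sequences indexed by $\mathbb{Z}$, and $\mathcal{S}^*$ its dual (sequences of polynomial growth, paired by $\sum b^pc_p$); $e_p\in\mathcal{S}^*$ is the sequence with $1$ in place $p$ and $0$ elsewhere. Via the Fourier isomorphism $\mathcal{S}\cong L\mathbb{C}=C^\infty(S^1,\mathbb{C})$, rotation of the circle by $\lambda\in S^1$ and reversal of loops give operators on $\mathcal{S}^*$ with $R_\lambda e_p=\lambda^{-p}e_p$ and $\iota e_p=e_{-p}$. $\mathcal{C}$ is the cone of continuous positive semi-definite sesquilinear forms on $\mathcal{S}^*$ invariant under all $R_\lambda$ and under $\iota$; $\mathcal{C}^+\subseteq\mathcal{C}$ is the sub-cone of positive definite forms. $\mathcal{T}$ is the cone of non-negative rapidly decreasing sequences $(a_p)_{p\in\mathbb{Z}}$ with $a_p=a_{-p}$ for all $p$, and $\mathcal{T}^+$ the sub-cone of strictly positive such sequences. *)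

theory Defs
  imports "HOL-Analysis.Analysis"
begin

definition rapidly_decreasing :: "(int \<Rightarrow> 'a::real_normed_vector) \<Rightarrow> bool" where
  "rapidly_decreasing c \<longleftrightarrow> (\<forall>k::nat. \<exists>C. \<forall>p. (1 + \<bar>real_of_int p\<bar>) ^ k * norm (c p) \<le> C)"

definition Sspace :: "(int \<Rightarrow> complex) set" where
  "Sspace = {c. rapidly_decreasing c}"

definition polynomial_growth :: "(int \<Rightarrow> complex) \<Rightarrow> bool" where
  "polynomial_growth b \<longleftrightarrow> (\<exists>(k::nat) C. \<forall>p. norm (b p) \<le> C * (1 + \<bar>real_of_int p\<bar>) ^ k)"

definition Sdual :: "(int \<Rightarrow> complex) set" where
  "Sdual = {b. polynomial_growth b}"

definition pairing :: "(int \<Rightarrow> complex) \<Rightarrow> (int \<Rightarrow> complex) \<Rightarrow> complex" where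
  "pairing b c = (\<Sum>\<^sub>\<infinity>p. b p * c p)"

definition ebasis :: "int \<Rightarrow> (int \<Rightarrow> complex)" where
  "ebasis p = (\<lambda>q. if q = p then 1 else 0)"

text \<open>Rotation and reversal on S* (transposes of the corresponding operators on S);
  R_lambda e_p = lambda^(-p) e_p, iota e_p = e_(-p).\<close>
definition rot :: "complex \<Rightarrow> (int \<Rightarrow> complex) \<Rightarrow> (int \<Rightarrow> complex)" where
  "rot z b = (\<lambda>p. z powi (- p) * b p)"

definition reversal :: "(int \<Rightarrow> complex) \<Rightarrow> (int \<Rightarrow> complex)" where
  "reversal b = (\<lambda>p. b (- p))"

text \<open>Bounded subsets of the Frechet space S, and polars (basic 0-neighbourhoods
  of the strong dual topology on S*).\<close>
definition S_bounded :: "(int \<Rightarrow> complex) set \<Rightarrow> bool" where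
  "S_bounded B \<longleftrightarrow> B \<subseteq> Sspace \<and>
     (\<forall>k::nat. \<exists>C. \<forall>c\<in>B. \<forall>p. (1 + \<bar>real_of_int p\<bar>) ^ k * norm (c p) \<le> C)"

definition polar :: "(int \<Rightarrow> complex) set \<Rightarrow> (int \<Rightarrow> complex) set" where
  "polar B = {b \<in> Sdual. \<forall>c\<in>B. norm (pairing b c) \<le> 1}"

type_synonym form = "(int \<Rightarrow> complex) \<Rightarrow> (int \<Rightarrow> complex) \<Rightarrow> complex"

text \<open>A form on S*, represented extensionally (value 0 outside S* x S*),
  conjugate-linear in the first and linear in the second argument.\<close>
definition sesquilinear_on_Sdual :: "form \<Rightarrow> bool" where
  "sesquilinear_on_Sdual f \<longleftrightarrow>
     (\<forall>b c. (b \<notin> Sdual \<or> c \<notin> Sdual) \<longrightarrow> f b c = 0) \<and>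
     (\<forall>a\<in>Sdual. \<forall>b\<in>Sdual. \<forall>c\<in>Sdual. \<forall>s t::complex.
        f a (\<lambda>p. s * b p + t * c p) = s * f a b + t * f a c \<and>
        f (\<lambda>p. s * b p + t * c p) a = cnj s * f b a + cnj t * f c a)"

text \<open>Joint continuity w.r.t. the strong dual topology: f is bounded on U x U
  for some 0-neighbourhood U = polar B, B bounded in S.\<close>
definition continuous_form :: "form \<Rightarrow> bool" where
  "continuous_form f \<longleftrightarrow>
     (\<exists>B. S_bounded B \<and> (\<exists>C. \<forall>b\<in>polar B. \<forall>c\<in>polar B. norm (f b c) \<le> C))"

definition pos_semidef :: "form \<Rightarrow> bool" where
  "pos_semidef f \<longleftrightarrow> (\<forall>b\<in>Sdual. Im (f b b) = 0 \<and> Re (f b b) \<ge> 0)"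

definition pos_def :: "form \<Rightarrow> bool" where
  "pos_def f \<longleftrightarrow> (\<forall>b\<in>Sdual. b \<noteq> (\<lambda>_. 0) \<longrightarrow> Im (f b b) = 0 \<and> Re (f b b) > 0)"

definition invariant_form :: "form \<Rightarrow> bool" where
  "invariant_form f \<longleftrightarrow>
     (\<forall>z::complex. norm z = 1 \<longrightarrow> (\<forall>b\<in>Sdual. \<forall>c\<in>Sdual. f (rot z b) (rot z c) = f b c)) \<and>
     (\<forall>b\<in>Sdual. \<forall>c\<in>Sdual. f (reversal b) (reversal c) = f b c)"

definition coneC :: "form set" where
  "coneC = {f. sesquilinear_on_Sdual f \<and> continuous_form f \<and> pos_semidef f \<and> invariant_form f}"

definition coneC_plus :: "form set" where
  "coneC_plus = {f \<in> coneC. pos_def f}"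

definition coneT :: "(int \<Rightarrow> real) set" where
  "coneT = {a. rapidly_decreasing a \<and> (\<forall>p. a p \<ge> 0 \<and> a p = a (- p))}"

definition coneT_plus :: "(int \<Rightarrow> real) set" where
  "coneT_plus = {a \<in> coneT. \<forall>p. a p > 0}"

text \<open>The map of the theorem: a form goes to its diagonal values on the e_p
  (which are real for positive semi-definite forms).\<close>
definition diag_map :: "form \<Rightarrow> (int \<Rightarrow> real)" where
  "diag_map f = (\<lambda>p. Re (f (ebasis p) (ebasis p)))"

end

theory Submission
  imports Defs
begin

text \<open>Rotation invariance forces f(e_p, e_q) = 0 for p \<noteq> q, so on sequences
  supported in [-N, N] a form f in C is the finite sum of f(e_p, e_p) cnj(b_p) c_p.
  Continuity for the strong dual topology bounds f on a multiple of the polar of a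
  bounded subset of S; as (1 + N) times the tail of b beyond N is still dominated by
  (1 + |p|) |b_p|, the truncations of b and c converge in f at rate 1/(N + 1), so f is
  determined by its diagonal. Testing continuity on (1 + |p|)^k e_p shows that the
  diagonal is rapidly decreasing; positivity and reversal make it nonnegative and even.
  Conversely, for a in T the series of a_p cnj(b_p) c_p converges on S* and defines a
  form in C with diagonal a, which is positive definite when all a_p > 0.\<close>

abbreviation weight :: "int \<Rightarrow> real" where
  "weight p \<equiv> 1 + \<bar>real_of_int p\<bar>"

lemma SdualI: "(\<And>p. norm (b p) \<le> C * weight p ^ k) \<Longrightarrow> b \<in> Sdual"
  unfolding Sdual_def polynomial_growth_def by (intro CollectI exI allI)

lemma Sdual_boundE:
  assumes "b \<in> Sdual"
  obtains C k where "C \<ge> 0" "\<And>p. norm (b p) \<le> C * weight p ^ k"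
proof -
  from assms obtain C k where bound: "\<And>p. norm (b p) \<le> C * weight p ^ k"
    unfolding Sdual_def polynomial_growth_def by auto
  have "C \<ge> 0"
    using bound[of 0] norm_ge_zero[of "b 0"] by (simp del: norm_ge_zero)
  then show ?thesis using bound by (rule that)
qed

lemma Sdual_dominated:
  assumes "b \<in> Sdual" "\<And>p. norm (u p) \<le> norm (b p)"
  shows "u \<in> Sdual"
proof -
  obtain C k where "C \<ge> 0" and bound: "\<And>p. norm (b p) \<le> C * weight p ^ k"
    using Sdual_boundE[OF assms(1)] by blast
  show ?thesis by (rule SdualI) (rule order.trans[OF assms(2) bound])
qed

lemma Sdual_lincomb:
  assumes "b \<in> Sdual" "c \<in> Sdual"
  shows "(\<lambda>p. s * b p + t * c p) \<in> Sdual"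
proof -
  obtain C1 k1 where C1: "C1 \<ge> 0" "\<And>p. norm (b p) \<le> C1 * weight p ^ k1"
    using Sdual_boundE[OF assms(1)] by blast
  obtain C2 k2 where C2: "C2 \<ge> 0" "\<And>p. norm (c p) \<le> C2 * weight p ^ k2"
    using Sdual_boundE[OF assms(2)] by blast
  have "norm (s * b p + t * c p) \<le> (norm s * C1 + norm t * C2) * weight p ^ (k1 + k2)" for p
  proof -
    have mono: "weight p ^ k \<le> weight p ^ (k1 + k2)" if "k \<le> k1 + k2" for k
      using that by (intro power_increasing) auto
    have "norm (s * b p + t * c p) \<le> norm s * norm (b p) + norm t * norm (c p)"
      using norm_triangle_ineq[of "s * b p" "t * c p"] by (simp add: norm_mult)
    also have "\<dots> \<le> norm s * (C1 * weight p ^ (k1 + k2)) + norm t * (C2 * weight p ^ (k1 + k2))"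
    proof (intro add_mono mult_left_mono)
      show "norm (b p) \<le> C1 * weight p ^ (k1 + k2)"
        using C1(2)[of p] mult_left_mono[OF mono[of k1] C1(1)] by linarith
      show "norm (c p) \<le> C2 * weight p ^ (k1 + k2)"
        using C2(2)[of p] mult_left_mono[OF mono[of k2] C2(1)] by linarith
    qed auto
    finally show ?thesis by (simp add: algebra_simps)
  qed
  then show ?thesis by (rule SdualI)
qed

lemma Sdual_scale: "b \<in> Sdual \<Longrightarrow> (\<lambda>p. s * b p) \<in> Sdual"
  using Sdual_lincomb[of b b s 0] by simp

lemma zero_in_Sdual: "(\<lambda>_. 0) \<in> Sdual"
  by (rule SdualI[of _ 0 0]) simp

lemma ebasis_in_Sdual: "ebasis p \<in> Sdual"
  by (rule SdualI[of _ 1 0]) (simp add: ebasis_def)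

lemma ebasis_nonzero: "ebasis p \<noteq> (\<lambda>_. 0)"
  by (metis ebasis_def one_neq_zero)

lemma Sdual_sum:
  assumes "finite S" "\<And>i. i \<in> S \<Longrightarrow> u i \<in> Sdual"
  shows "(\<lambda>q. \<Sum>i\<in>S. s i * u i q) \<in> Sdual"
  using assms
proof (induction S rule: finite_induct)
  case empty
  then show ?case by (simp add: zero_in_Sdual)
next
  case (insert x F)
  then show ?case using Sdual_lincomb[of "u x" "\<lambda>q. \<Sum>i\<in>F. s i * u i q" "s x" 1] by simp
qed

lemma rot_in_Sdual: "norm z = 1 \<Longrightarrow> b \<in> Sdual \<Longrightarrow> rot z b \<in> Sdual"
  by (erule Sdual_dominated) (simp add: rot_def norm_mult norm_power_int)

lemma reversal_in_Sdual:
  assumes "b \<in> Sdual"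
  shows "reversal b \<in> Sdual"
proof -
  obtain C k where "C \<ge> 0" and bound: "\<And>p. norm (b p) \<le> C * weight p ^ k"
    using Sdual_boundE[OF assms] by blast
  have "norm (reversal b p) \<le> C * weight p ^ k" for p
    using bound[of "- p"] by (simp add: reversal_def)
  then show ?thesis by (rule SdualI)
qed

context
  fixes f :: form
  assumes sesq: "sesquilinear_on_Sdual f"
begin

lemma sesq_linear_right:
  "a \<in> Sdual \<Longrightarrow> b \<in> Sdual \<Longrightarrow> c \<in> Sdual \<Longrightarrow>
    f a (\<lambda>p. s * b p + t * c p) = s * f a b + t * f a c"
  using sesq unfolding sesquilinear_on_Sdual_def by blast

lemma sesq_linear_left:
  "a \<in> Sdual \<Longrightarrow> b \<in> Sdual \<Longrightarrow> c \<in> Sdual \<Longrightarrow>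
    f (\<lambda>p. s * b p + t * c p) a = cnj s * f b a + cnj t * f c a"
  using sesq unfolding sesquilinear_on_Sdual_def by blast

lemma sesq_outside: "b \<notin> Sdual \<or> c \<notin> Sdual \<Longrightarrow> f b c = 0"
  using sesq unfolding sesquilinear_on_Sdual_def by blast

lemma sesq_scale_right: "a \<in> Sdual \<Longrightarrow> b \<in> Sdual \<Longrightarrow> f a (\<lambda>p. s * b p) = s * f a b"
  using sesq_linear_right[of a b b s 0] by simp

lemma sesq_scale_left: "a \<in> Sdual \<Longrightarrow> b \<in> Sdual \<Longrightarrow> f (\<lambda>p. s * b p) a = cnj s * f b a"
  using sesq_linear_left[of a b b s 0] by simp

lemma sesq_add_right:
  "a \<in> Sdual \<Longrightarrow> b \<in> Sdual \<Longrightarrow> c \<in> Sdual \<Longrightarrow> f a (\<lambda>p. b p + c p) = f a b + f a c"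
  using sesq_linear_right[of a b c 1 1] by simp

lemma sesq_add_left:
  "a \<in> Sdual \<Longrightarrow> b \<in> Sdual \<Longrightarrow> c \<in> Sdual \<Longrightarrow> f (\<lambda>p. b p + c p) a = f b a + f c a"
  using sesq_linear_left[of a b c 1 1] by simp

lemma sesq_scale_real:
  "u \<in> Sdual \<Longrightarrow> v \<in> Sdual \<Longrightarrow>
    f (\<lambda>q. complex_of_real r * u q) (\<lambda>q. complex_of_real s * v q) = complex_of_real (r * s) * f u v"
  using sesq_scale_left sesq_scale_right Sdual_scale by simp

lemma sesq_sum_right:
  assumes "finite S" "\<And>i. i \<in> S \<Longrightarrow> u i \<in> Sdual" "a \<in> Sdual"
  shows "f a (\<lambda>q. \<Sum>i\<in>S. s i * u i q) = (\<Sum>i\<in>S. s i * f a (u i))"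
  using assms
proof (induction S rule: finite_induct)
  case empty
  then show ?case using sesq_scale_right[of a "\<lambda>_. 0" 0] by (simp add: zero_in_Sdual)
next
  case (insert x F)
  then show ?case
    using sesq_linear_right[of a "u x" "\<lambda>q. \<Sum>i\<in>F. s i * u i q" "s x" 1] Sdual_sum[of F u s]
    by simp
qed

lemma sesq_sum_left:
  assumes "finite S" "\<And>i. i \<in> S \<Longrightarrow> u i \<in> Sdual" "a \<in> Sdual"
  shows "f (\<lambda>q. \<Sum>i\<in>S. s i * u i q) a = (\<Sum>i\<in>S. cnj (s i) * f (u i) a)"
  using assms
proof (induction S rule: finite_induct)
  case empty
  then show ?case using sesq_scale_left[of a "\<lambda>_. 0" 0] by (simp add: zero_in_Sdual)
next
  case (insert x F)
  then show ?case
    using sesq_linear_left[of a "u x" "\<lambda>q. \<Sum>i\<in>F. s i * u i q" "s x" 1] Sdual_sum[of F u s]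
    by simp
qed

end

lemma infsum_single_point:
  fixes g :: "'a \<Rightarrow> 'b::{comm_monoid_add,t2_space}"
  assumes "\<And>q. q \<noteq> p \<Longrightarrow> g q = 0"
  shows "(\<Sum>\<^sub>\<infinity>q. g q) = g p"
proof -
  have "(\<Sum>\<^sub>\<infinity>q. g q) = (\<Sum>\<^sub>\<infinity>q\<in>{p}. g q)"
    by (rule infsum_cong_neutral) (use assms in auto)
  then show ?thesis by simp
qed

lemma pairing_scaled_ebasis_left: "pairing (\<lambda>q. x * ebasis p q) d = x * d p"
  unfolding pairing_def by (subst infsum_single_point[where p = p]) (auto simp: ebasis_def)

lemma pairing_scaled_ebasis_right: "pairing u (\<lambda>q. x * ebasis p q) = u p * x"
  unfolding pairing_def by (subst infsum_single_point[where p = p]) (auto simp: ebasis_def)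

lemma summable_on_inverse_weight_square: "(\<lambda>p. 1 / weight p ^ 2) summable_on UNIV"
proof -
  have nat_summable: "(\<lambda>n::nat. 1 / (1 + real n) ^ 2) summable_on UNIV"
  proof (rule summable_nonneg_imp_summable_on)
    have "summable (\<lambda>n::nat. inverse (real (Suc n) ^ 2))"
      using inverse_power_summable[of 2, where 'a=real] by (subst summable_Suc_iff) simp
    then show "summable (\<lambda>n::nat. 1 / (1 + real n) ^ 2)"
      by (simp add: inverse_eq_divide add.commute)
  qed auto
  have "(\<lambda>p. 1 / weight p ^ 2) summable_on range int"
    using nat_summable by (subst summable_on_reindex) (auto simp: o_def)
  moreover have "(\<lambda>p. 1 / weight p ^ 2) summable_on range (\<lambda>n. - int n)"
    using nat_summable by (subst summable_on_reindex) (auto simp: o_def inj_def)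
  ultimately have "(\<lambda>p. 1 / weight p ^ 2) summable_on (range int \<union> range (\<lambda>n. - int n))"
    by (rule summable_on_union)
  moreover have "range int \<union> range (\<lambda>n. - int n) = (UNIV :: int set)"
    by (auto intro: int_cases2)
  ultimately show ?thesis by simp
qed

definition weight_sum :: real where
  "weight_sum = (\<Sum>\<^sub>\<infinity>p. 1 / weight p ^ 2)"

lemma weight_sum_nonneg: "weight_sum \<ge> 0"
  unfolding weight_sum_def by (rule infsum_nonneg) simp

lemma infsum_weight_bound:
  fixes g :: "int \<Rightarrow> 'a::banach"
  assumes bound: "\<And>p. norm (g p) \<le> M / weight p ^ 2"
  shows "g summable_on UNIV" and "norm (\<Sum>\<^sub>\<infinity>p. g p) \<le> M * weight_sum"
proof -
  have majorant: "(\<lambda>p. M / weight p ^ 2) summable_on UNIV"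
    using summable_on_cmult_right[OF summable_on_inverse_weight_square, of M] by simp
  have abs: "g abs_summable_on UNIV"
    using Infinite_Sum.abs_summable_on_comparison_test'[OF majorant] bound by blast
  then show "g summable_on UNIV" by (rule abs_summable_summable)
  have "norm (\<Sum>\<^sub>\<infinity>p. g p) \<le> (\<Sum>\<^sub>\<infinity>p. norm (g p))"
    by (rule norm_infsum_bound[OF abs])
  also have "\<dots> \<le> (\<Sum>\<^sub>\<infinity>p. M / weight p ^ 2)"
    using abs majorant bound by (rule infsum_mono)
  also have "\<dots> = M * weight_sum"
    unfolding weight_sum_def
    using infsum_cmult_right[OF summable_on_inverse_weight_square, of M] by simp
  finally show "norm (\<Sum>\<^sub>\<infinity>p. g p) \<le> M * weight_sum" .
qed

lemma rot_scaled_ebasis: "rot z (ebasis p) = (\<lambda>q. z powi (- p) * ebasis p q)"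
  unfolding rot_def ebasis_def by (auto simp: fun_eq_iff)

lemma reversal_ebasis: "reversal (ebasis p) = ebasis (- p)"
  unfolding reversal_def ebasis_def by (auto simp: fun_eq_iff)

lemma invariant_form_ebasis_orthogonal:
  assumes sesq: "sesquilinear_on_Sdual f" and inv: "invariant_form f" and "p \<noteq> q"
  shows "f (ebasis p) (ebasis q) = 0"
proof -
  \<comment> \<open>rotating by z multiplies f(e_p, e_q) by cnj (z^-p) z^-q = cis pi\<close>
  define z where "z = cis (pi / real_of_int (p - q))"
  have "f (ebasis p) (ebasis q) = f (rot z (ebasis p)) (rot z (ebasis q))"
    using inv ebasis_in_Sdual unfolding invariant_form_def z_def by simp
  also have "\<dots> = cnj (z powi (- p)) * z powi (- q) * f (ebasis p) (ebasis q)"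
    unfolding rot_scaled_ebasis
    using sesq_scale_left[OF sesq] sesq_scale_right[OF sesq] ebasis_in_Sdual Sdual_scale by simp
  also have "cnj (z powi (- p)) * z powi (- q) = cis (real_of_int (p - q) * (pi / real_of_int (p - q)))"
    unfolding z_def cis_power_int cis_cnj cis_mult by (simp add: algebra_simps diff_divide_distrib)
  also have "\<dots> = -1"
    using \<open>p \<noteq> q\<close> by simp
  finally show ?thesis by simp
qed

definition trunc :: "nat \<Rightarrow> (int \<Rightarrow> complex) \<Rightarrow> (int \<Rightarrow> complex)" where
  "trunc N b = (\<lambda>q. if \<bar>q\<bar> \<le> int N then b q else 0)"

definition tail :: "nat \<Rightarrow> (int \<Rightarrow> complex) \<Rightarrow> (int \<Rightarrow> complex)" where
  "tail N b = (\<lambda>q. if \<bar>q\<bar> \<le> int N then 0 else b q)"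

lemma trunc_plus_tail: "(\<lambda>q. trunc N b q + tail N b q) = b"
  unfolding trunc_def tail_def by auto

lemma trunc_in_Sdual: "b \<in> Sdual \<Longrightarrow> trunc N b \<in> Sdual"
  by (erule Sdual_dominated) (simp add: trunc_def)

lemma tail_in_Sdual: "b \<in> Sdual \<Longrightarrow> tail N b \<in> Sdual"
  by (erule Sdual_dominated) (simp add: tail_def)

lemma norm_le_weight_mult: "norm x \<le> weight q * norm x"
  by (simp add: mult_le_cancel_right1)

lemma trunc_dominated: "norm (trunc N b q) \<le> weight q * norm (b q)"
  by (simp add: trunc_def norm_le_weight_mult)

lemma tail_dominated: "(1 + real N) * norm (tail N b q) \<le> weight q * norm (b q)"
proof (cases "\<bar>q\<bar> \<le> int N")
  case False
  then have "1 + real N \<le> weight q" by linarith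
  then show ?thesis
    using False by (simp add: tail_def mult_right_mono)
qed (simp add: tail_def)

lemma trunc_eq_sum_ebasis: "trunc N b = (\<lambda>q. \<Sum>p\<in>{- int N..int N}. b p * ebasis p q)"
proof
  fix q
  have "(\<Sum>p\<in>{- int N..int N}. b p * ebasis p q) = (\<Sum>p\<in>{- int N..int N}. if q = p then b q else 0)"
    by (rule sum.cong) (auto simp: ebasis_def)
  then show "trunc N b q = (\<Sum>p\<in>{- int N..int N}. b p * ebasis p q)"
    unfolding trunc_def by (auto simp: abs_le_iff)
qed

lemma invariant_form_trunc:
  assumes sesq: "sesquilinear_on_Sdual f" and inv: "invariant_form f"
  shows "f (trunc N b) (trunc N c) =
    (\<Sum>p\<in>{- int N..int N}. cnj (b p) * c p * f (ebasis p) (ebasis p))"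
proof -
  let ?I = "{- int N..int N}"
  have "trunc N c \<in> Sdual"
    unfolding trunc_eq_sum_ebasis by (rule Sdual_sum) (auto simp: ebasis_in_Sdual)
  then have "f (trunc N b) (trunc N c) = (\<Sum>p\<in>?I. cnj (b p) * f (ebasis p) (trunc N c))"
    unfolding trunc_eq_sum_ebasis[of N b] by (intro sesq_sum_left[OF sesq]) (auto simp: ebasis_in_Sdual)
  also have "\<dots> = (\<Sum>p\<in>?I. cnj (b p) * (c p * f (ebasis p) (ebasis p)))"
  proof (rule sum.cong[OF refl])
    fix p assume "p \<in> ?I"
    have "f (ebasis p) (trunc N c) = (\<Sum>q\<in>?I. c q * f (ebasis p) (ebasis q))"
      unfolding trunc_eq_sum_ebasis[of N c] by (intro sesq_sum_right[OF sesq]) (auto simp: ebasis_in_Sdual)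
    also have "\<dots> = (\<Sum>q\<in>?I. if q = p then c p * f (ebasis p) (ebasis p) else 0)"
      by (rule sum.cong[OF refl]) (auto simp: invariant_form_ebasis_orthogonal[OF sesq inv])
    also have "\<dots> = c p * f (ebasis p) (ebasis p)"
      using \<open>p \<in> ?I\<close> by simp
    finally show "cnj (b p) * f (ebasis p) (trunc N c) = cnj (b p) * (c p * f (ebasis p) (ebasis p))"
      by simp
  qed
  finally show ?thesis by (simp add: mult.assoc)
qed

lemma S_boundedE:
  assumes "S_bounded B"
  obtains C where "C \<ge> 0" "\<And>d p. d \<in> B \<Longrightarrow> weight p ^ k * norm (d p) \<le> C"
proof -
  obtain C where "\<And>d p. d \<in> B \<Longrightarrow> weight p ^ k * norm (d p) \<le> C"
    using assms unfolding S_bounded_def by blast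
  then show ?thesis
    by (intro that[of "max C 0"]) (auto intro: max.coboundedI1)
qed

lemma weight_product_bound:
  fixes x y z :: real
  assumes "x \<le> weight q * y" "y \<le> Cb * weight q ^ k" "weight q ^ (k + 3) * z \<le> Cd"
    and "Cb \<ge> 0" "z \<ge> 0"
  shows "x * z \<le> Cb * Cd / weight q ^ 2"
proof -
  have "x \<le> weight q * (Cb * weight q ^ k)"
    using assms(1) mult_left_mono[OF assms(2), of "weight q"] by simp
  then have "x * z * weight q ^ 2 \<le> weight q * (Cb * weight q ^ k) * z * weight q ^ 2"
    using \<open>z \<ge> 0\<close> by (intro mult_right_mono) auto
  also have "\<dots> = Cb * (weight q ^ (k + 3) * z)"
    by (simp add: power_add power2_eq_square power3_eq_cube algebra_simps)
  also have "\<dots> \<le> Cb * Cd"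
    using assms(3) \<open>Cb \<ge> 0\<close> by (rule mult_left_mono)
  finally show ?thesis by (simp add: pos_le_divide_eq)
qed

lemma polar_absorbs_dominated:
  assumes "S_bounded B" "b \<in> Sdual"
  obtains r where "r > 0"
    "\<And>u s. u \<in> Sdual \<Longrightarrow> s > 0 \<Longrightarrow> (\<And>q. s * norm (u q) \<le> weight q * norm (b q)) \<Longrightarrow>
       (\<lambda>q. complex_of_real (r * s) * u q) \<in> polar B"
proof -
  obtain Cb k where "Cb \<ge> 0" and b_bound: "\<And>q. norm (b q) \<le> Cb * weight q ^ k"
    using Sdual_boundE[OF assms(2)] by blast
  obtain Cd where "Cd \<ge> 0" and d_bound: "\<And>d q. d \<in> B \<Longrightarrow> weight q ^ (k + 3) * norm (d q) \<le> Cd"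
    using S_boundedE[OF assms(1)] by blast
  define r where "r = 1 / (Cb * Cd * weight_sum + 1)"
  have "Cb * Cd * weight_sum \<ge> 0"
    using \<open>Cb \<ge> 0\<close> \<open>Cd \<ge> 0\<close> weight_sum_nonneg by simp
  then have "r > 0" and r_bound: "r * (Cb * Cd) * weight_sum \<le> 1"
    unfolding r_def by (simp_all add: field_simps)
  have "(\<lambda>q. complex_of_real (r * s) * u q) \<in> polar B"
    if "u \<in> Sdual" "s > 0" and u_bound: "\<And>q. s * norm (u q) \<le> weight q * norm (b q)" for u s
    unfolding polar_def
  proof (intro CollectI conjI ballI)
    show "(\<lambda>q. complex_of_real (r * s) * u q) \<in> Sdual"
      using \<open>u \<in> Sdual\<close> by (rule Sdual_scale)
    fix d assume "d \<in> B"
    have "norm (complex_of_real (r * s) * u q * d q) \<le> r * (Cb * Cd) / weight q ^ 2" for q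
    proof -
      have "s * norm (u q) * norm (d q) \<le> Cb * Cd / weight q ^ 2"
        using u_bound b_bound d_bound[OF \<open>d \<in> B\<close>] \<open>Cb \<ge> 0\<close> by (rule weight_product_bound) simp
      then have "r * (s * norm (u q) * norm (d q)) \<le> r * (Cb * Cd / weight q ^ 2)"
        using \<open>r > 0\<close> by (intro mult_left_mono) auto
      then show ?thesis
        using \<open>r > 0\<close> \<open>s > 0\<close> by (simp add: norm_mult mult.assoc)
    qed
    then have "norm (pairing (\<lambda>q. complex_of_real (r * s) * u q) d) \<le> r * (Cb * Cd) * weight_sum"
      unfolding pairing_def by (rule infsum_weight_bound(2))
    then show "norm (pairing (\<lambda>q. complex_of_real (r * s) * u q) d) \<le> 1"
      using r_bound by linarith
  qed
  with \<open>r > 0\<close> show ?thesis by (rule that)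
qed

lemma continuous_form_dominated_bound:
  assumes sesq: "sesquilinear_on_Sdual f" and "continuous_form f" "b \<in> Sdual" "c \<in> Sdual"
  obtains M where
    "\<And>u v s t. u \<in> Sdual \<Longrightarrow> v \<in> Sdual \<Longrightarrow> s > 0 \<Longrightarrow> t > 0 \<Longrightarrow>
       (\<And>q. s * norm (u q) \<le> weight q * norm (b q)) \<Longrightarrow> (\<And>q. t * norm (v q) \<le> weight q * norm (c q)) \<Longrightarrow>
       norm (f u v) \<le> M / (s * t)"
proof -
  obtain B C where "S_bounded B" and f_bound: "\<And>u v. u \<in> polar B \<Longrightarrow> v \<in> polar B \<Longrightarrow> norm (f u v) \<le> C"
    using \<open>continuous_form f\<close> unfolding continuous_form_def by blast
  obtain r where "r > 0" and r_polar: "\<And>u s. u \<in> Sdual \<Longrightarrow> s > 0 \<Longrightarrow>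
      (\<And>q. s * norm (u q) \<le> weight q * norm (b q)) \<Longrightarrow> (\<lambda>q. complex_of_real (r * s) * u q) \<in> polar B"
    using polar_absorbs_dominated[OF \<open>S_bounded B\<close> \<open>b \<in> Sdual\<close>] by blast
  obtain r' where "r' > 0" and r'_polar: "\<And>v t. v \<in> Sdual \<Longrightarrow> t > 0 \<Longrightarrow>
      (\<And>q. t * norm (v q) \<le> weight q * norm (c q)) \<Longrightarrow> (\<lambda>q. complex_of_real (r' * t) * v q) \<in> polar B"
    using polar_absorbs_dominated[OF \<open>S_bounded B\<close> \<open>c \<in> Sdual\<close>] by blast
  have "norm (f u v) \<le> C / (r * r') / (s * t)"
    if "u \<in> Sdual" "v \<in> Sdual" "s > 0" "t > 0" "\<And>q. s * norm (u q) \<le> weight q * norm (b q)"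
      "\<And>q. t * norm (v q) \<le> weight q * norm (c q)" for u v s t
  proof -
    have "f (\<lambda>q. complex_of_real (r * s) * u q) (\<lambda>q. complex_of_real (r' * t) * v q) =
        complex_of_real (r * s * (r' * t)) * f u v"
      by (rule sesq_scale_real[OF sesq \<open>u \<in> Sdual\<close> \<open>v \<in> Sdual\<close>])
    moreover have "norm (f (\<lambda>q. complex_of_real (r * s) * u q) (\<lambda>q. complex_of_real (r' * t) * v q)) \<le> C"
      using that by (intro f_bound r_polar r'_polar)
    ultimately have "r * s * (r' * t) * norm (f u v) \<le> C"
      using \<open>r > 0\<close> \<open>r' > 0\<close> \<open>s > 0\<close> \<open>t > 0\<close> by (simp add: norm_mult)
    then show ?thesis
      using \<open>r > 0\<close> \<open>r' > 0\<close> \<open>s > 0\<close> \<open>t > 0\<close> by (simp add: field_simps)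
  qed
  then show ?thesis by (rule that)
qed

lemma sesq_trunc_tail_decompose:
  assumes sesq: "sesquilinear_on_Sdual f" and b: "b \<in> Sdual" and c: "c \<in> Sdual"
  shows "f b c = f (trunc N b) (trunc N c) + f (trunc N b) (tail N c) + f (tail N b) c"
proof -
  have "f b c = f (\<lambda>q. trunc N b q + tail N b q) c"
    by (simp only: trunc_plus_tail)
  also have "\<dots> = f (trunc N b) c + f (tail N b) c"
    by (rule sesq_add_left[OF sesq c trunc_in_Sdual[OF b] tail_in_Sdual[OF b]])
  also have "f (trunc N b) c = f (trunc N b) (\<lambda>q. trunc N c q + tail N c q)"
    by (simp only: trunc_plus_tail)
  also have "\<dots> = f (trunc N b) (trunc N c) + f (trunc N b) (tail N c)"
    by (rule sesq_add_right[OF sesq trunc_in_Sdual[OF b] trunc_in_Sdual[OF c] tail_in_Sdual[OF c]])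
  finally show ?thesis .
qed

lemma continuous_form_trunc_tendsto:
  assumes sesq: "sesquilinear_on_Sdual f" and "continuous_form f" and b: "b \<in> Sdual" and c: "c \<in> Sdual"
  shows "(\<lambda>N. f (trunc N b) (trunc N c)) \<longlonglongrightarrow> f b c"
proof -
  obtain M where M:
    "\<And>u v s t. u \<in> Sdual \<Longrightarrow> v \<in> Sdual \<Longrightarrow> s > 0 \<Longrightarrow> t > 0 \<Longrightarrow>
       (\<And>q. s * norm (u q) \<le> weight q * norm (b q)) \<Longrightarrow> (\<And>q. t * norm (v q) \<le> weight q * norm (c q)) \<Longrightarrow>
       norm (f u v) \<le> M / (s * t)"
    using continuous_form_dominated_bound[OF assms] by blast
  have bound: "norm (f (trunc N b) (trunc N c) - f b c) \<le> 2 * M / real (Suc N)" for N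
  proof -
    have left: "norm (f (trunc N b) (tail N c)) \<le> M / (1 * (1 + real N))"
      by (rule M) (simp_all add: b c trunc_in_Sdual tail_in_Sdual trunc_dominated tail_dominated)
    have right: "norm (f (tail N b) c) \<le> M / ((1 + real N) * 1)"
      by (rule M) (simp_all add: b c tail_in_Sdual tail_dominated norm_le_weight_mult)
    have "norm (f (trunc N b) (trunc N c) - f b c) = norm (- (f (trunc N b) (tail N c) + f (tail N b) c))"
      using sesq_trunc_tail_decompose[OF sesq b c, of N] by (simp add: algebra_simps)
    also have "\<dots> \<le> norm (f (trunc N b) (tail N c)) + norm (f (tail N b) c)"
      unfolding norm_minus_cancel by (rule norm_triangle_ineq)
    also have "\<dots> \<le> 2 * M / real (Suc N)"
      using left right by simp
    finally show ?thesis .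
  qed
  have "(\<lambda>N. 2 * M / real (Suc N)) \<longlonglongrightarrow> 0"
    using LIMSEQ_Suc[OF lim_const_over_n[of "2 * M"]] by simp
  then have "(\<lambda>N. f (trunc N b) (trunc N c) - f b c) \<longlonglongrightarrow> 0"
    by (rule Lim_null_comparison[OF always_eventually[OF allI[OF bound]]])
  then show ?thesis by (rule LIM_zero_cancel)
qed

lemma invariant_continuous_form_eqI:
  assumes "sesquilinear_on_Sdual f" "continuous_form f" "invariant_form f"
    and "sesquilinear_on_Sdual g" "continuous_form g" "invariant_form g"
    and diag: "\<And>p. f (ebasis p) (ebasis p) = g (ebasis p) (ebasis p)"
  shows "f = g"
proof (intro ext)
  fix b c
  show "f b c = g b c"
  proof (cases "b \<in> Sdual \<and> c \<in> Sdual")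
    case True
    have "(\<lambda>N. f (trunc N b) (trunc N c)) \<longlonglongrightarrow> f b c"
      using assms True by (intro continuous_form_trunc_tendsto) auto
    moreover have "(\<lambda>N. f (trunc N b) (trunc N c)) \<longlonglongrightarrow> g b c"
      using continuous_form_trunc_tendsto[of g b c] assms True
      by (simp add: invariant_form_trunc diag)
    ultimately show ?thesis by (rule LIMSEQ_unique)
  next
    case False
    then show ?thesis using sesq_outside assms by metis
  qed
qed

lemma scaled_ebasis_in_polar:
  assumes "S_bounded B"
  obtains M where "M > 0" "\<And>p. (\<lambda>q. complex_of_real (weight p ^ k / M) * ebasis p q) \<in> polar B"
proof -
  obtain C where "C \<ge> 0" and C: "\<And>d p. d \<in> B \<Longrightarrow> weight p ^ k * norm (d p) \<le> C"
    using S_boundedE[OF assms] by blast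
  have "(\<lambda>q. complex_of_real (weight p ^ k / (C + 1)) * ebasis p q) \<in> polar B" for p
    unfolding polar_def
  proof (intro CollectI conjI ballI)
    show "(\<lambda>q. complex_of_real (weight p ^ k / (C + 1)) * ebasis p q) \<in> Sdual"
      by (rule Sdual_scale[OF ebasis_in_Sdual])
    fix d assume "d \<in> B"
    have "norm (pairing (\<lambda>q. complex_of_real (weight p ^ k / (C + 1)) * ebasis p q) d) =
        weight p ^ k * norm (d p) / (C + 1)"
      unfolding pairing_scaled_ebasis_left norm_mult norm_of_real using \<open>C \<ge> 0\<close> by simp
    also have "\<dots> \<le> 1"
      using C[OF \<open>d \<in> B\<close>, of p] \<open>C \<ge> 0\<close> by simp
    finally show "norm (pairing (\<lambda>q. complex_of_real (weight p ^ k / (C + 1)) * ebasis p q) d) \<le> 1" .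
  qed
  moreover have "C + 1 > 0" using \<open>C \<ge> 0\<close> by simp
  ultimately show ?thesis using that by blast
qed

lemma continuous_form_diagonal_rapidly_decreasing:
  assumes sesq: "sesquilinear_on_Sdual f" and "continuous_form f"
  shows "rapidly_decreasing (\<lambda>p. f (ebasis p) (ebasis p))"
  unfolding rapidly_decreasing_def
proof
  fix k
  obtain B C where "S_bounded B" and f_bound: "\<And>u v. u \<in> polar B \<Longrightarrow> v \<in> polar B \<Longrightarrow> norm (f u v) \<le> C"
    using \<open>continuous_form f\<close> unfolding continuous_form_def by blast
  obtain M where "M > 0" and polar: "\<And>p. (\<lambda>q. complex_of_real (weight p ^ k / M) * ebasis p q) \<in> polar B"
    using scaled_ebasis_in_polar[OF \<open>S_bounded B\<close>] by blast
  have "weight p ^ k * norm (f (ebasis p) (ebasis p)) \<le> C * M ^ 2" for p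
  proof -
    let ?l = "weight p ^ k / M"
    have "f (\<lambda>q. complex_of_real ?l * ebasis p q) (\<lambda>q. complex_of_real ?l * ebasis p q) =
        complex_of_real (?l * ?l) * f (ebasis p) (ebasis p)"
      by (rule sesq_scale_real[OF sesq ebasis_in_Sdual ebasis_in_Sdual])
    then have "?l * ?l * norm (f (ebasis p) (ebasis p)) =
        norm (f (\<lambda>q. complex_of_real ?l * ebasis p q) (\<lambda>q. complex_of_real ?l * ebasis p q))"
      by (simp only: norm_mult norm_of_real abs_mult abs_mult_self_eq)
    also have "\<dots> \<le> C"
      by (rule f_bound[OF polar polar])
    finally have "weight p ^ k * (weight p ^ k * norm (f (ebasis p) (ebasis p))) \<le> C * M ^ 2"
      using \<open>M > 0\<close> by (simp add: field_simps power2_eq_square)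
    moreover have "1 * (weight p ^ k * norm (f (ebasis p) (ebasis p))) \<le>
        weight p ^ k * (weight p ^ k * norm (f (ebasis p) (ebasis p)))"
      by (rule mult_right_mono) (simp_all add: one_le_power)
    ultimately show ?thesis by linarith
  qed
  then show "\<exists>C. \<forall>p. weight p ^ k * norm (f (ebasis p) (ebasis p)) \<le> C" by blast
qed

lemma rapidly_decreasing_dominated:
  fixes a :: "int \<Rightarrow> 'a::real_normed_vector" and c :: "int \<Rightarrow> 'b::real_normed_vector"
  assumes "rapidly_decreasing c" "\<And>p. norm (a p) \<le> norm (c p)"
  shows "rapidly_decreasing a"
  unfolding rapidly_decreasing_def
proof
  fix k
  obtain C where C: "\<And>p. weight p ^ k * norm (c p) \<le> C"
    using assms(1) unfolding rapidly_decreasing_def by blast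
  have "weight p ^ k * norm (a p) \<le> C" for p
    by (rule order.trans[OF mult_left_mono[OF assms(2)] C]) simp
  then show "\<exists>C. \<forall>p. weight p ^ k * norm (a p) \<le> C" by blast
qed

lemma diag_map_in_coneT:
  assumes "f \<in> coneC"
  shows "diag_map f \<in> coneT"
  unfolding coneT_def
proof (intro CollectI conjI allI)
  have sesq: "sesquilinear_on_Sdual f" and "continuous_form f" "pos_semidef f" "invariant_form f"
    using assms unfolding coneC_def by auto
  show "diag_map f p \<ge> 0" for p
    using \<open>pos_semidef f\<close> ebasis_in_Sdual unfolding pos_semidef_def diag_map_def by auto
  show "diag_map f p = diag_map f (- p)" for p
  proof -
    have "f (reversal (ebasis p)) (reversal (ebasis p)) = f (ebasis p) (ebasis p)"
      using \<open>invariant_form f\<close> ebasis_in_Sdual unfolding invariant_form_def by blast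
    then show ?thesis unfolding diag_map_def reversal_ebasis by simp
  qed
  show "rapidly_decreasing (diag_map f)"
    using continuous_form_diagonal_rapidly_decreasing[OF sesq \<open>continuous_form f\<close>]
    by (rule rapidly_decreasing_dominated) (simp add: diag_map_def abs_Re_le_cmod)
qed

lemma diag_map_in_coneT_plus:
  assumes "f \<in> coneC_plus"
  shows "diag_map f \<in> coneT_plus"
proof -
  have "diag_map f p > 0" for p
    using assms ebasis_in_Sdual ebasis_nonzero
    unfolding coneC_plus_def pos_def_def diag_map_def by blast
  then show ?thesis
    using assms diag_map_in_coneT unfolding coneC_plus_def coneT_plus_def by blast
qed

definition diag_form :: "(int \<Rightarrow> real) \<Rightarrow> form" where
  "diag_form a = (\<lambda>b c. if b \<in> Sdual \<and> c \<in> Sdual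
      then \<Sum>\<^sub>\<infinity>p. complex_of_real (a p) * (cnj (b p) * c p) else 0)"

lemma rapidly_decreasing_times_Sdual_bound:
  assumes "rapidly_decreasing a" "b \<in> Sdual" "c \<in> Sdual"
  obtains M where "\<And>p. norm (a p) * (norm (b p) * norm (c p)) \<le> M / weight p ^ 2"
proof -
  obtain Cb kb where "Cb \<ge> 0" and b_bound: "\<And>p. norm (b p) \<le> Cb * weight p ^ kb"
    using Sdual_boundE[OF assms(2)] by blast
  obtain Cc kc where "Cc \<ge> 0" and c_bound: "\<And>p. norm (c p) \<le> Cc * weight p ^ kc"
    using Sdual_boundE[OF assms(3)] by blast
  obtain Ca where a_bound: "\<And>p. weight p ^ (kb + kc + 2) * norm (a p) \<le> Ca"
    using assms(1) unfolding rapidly_decreasing_def by blast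
  have "norm (a p) * (norm (b p) * norm (c p)) \<le> Cb * Cc * Ca / weight p ^ 2" for p
  proof -
    have "norm (a p) * (norm (b p) * norm (c p)) * weight p ^ 2 \<le>
        norm (a p) * ((Cb * weight p ^ kb) * (Cc * weight p ^ kc)) * weight p ^ 2"
      using b_bound c_bound \<open>Cb \<ge> 0\<close> by (intro mult_right_mono mult_left_mono mult_mono) auto
    also have "\<dots> = Cb * Cc * (weight p ^ (kb + kc + 2) * norm (a p))"
      by (simp only: power_add mult_ac)
    also have "\<dots> \<le> Cb * Cc * Ca"
      using a_bound \<open>Cb \<ge> 0\<close> \<open>Cc \<ge> 0\<close> by (intro mult_left_mono) auto
    finally show ?thesis by (simp add: pos_le_divide_eq)
  qed
  then show ?thesis by (rule that)
qed

lemma diag_form_summable: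
  assumes "rapidly_decreasing a" "b \<in> Sdual" "c \<in> Sdual"
  shows "(\<lambda>p. complex_of_real (a p) * (cnj (b p) * c p)) summable_on UNIV"
proof -
  obtain M where "\<And>p. norm (a p) * (norm (b p) * norm (c p)) \<le> M / weight p ^ 2"
    using rapidly_decreasing_times_Sdual_bound[OF assms] by blast
  then show ?thesis
    by (intro infsum_weight_bound(1)[where M = M]) (simp add: norm_mult)
qed

lemma diag_form_sesquilinear:
  assumes "rapidly_decreasing a"
  shows "sesquilinear_on_Sdual (diag_form a)"
  unfolding sesquilinear_on_Sdual_def
proof (intro conjI allI impI ballI)
  fix b c assume "b \<notin> Sdual \<or> c \<notin> Sdual"
  then show "diag_form a b c = 0" unfolding diag_form_def by auto
next
  fix b c d :: "int \<Rightarrow> complex" and s t :: complex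
  assume b: "b \<in> Sdual" and c: "c \<in> Sdual" and d: "d \<in> Sdual"
  let ?T = "\<lambda>u v p. complex_of_real (a p) * (cnj (u p) * v p)"
  have lincomb: "(\<lambda>p. s * c p + t * d p) \<in> Sdual"
    using c d by (rule Sdual_lincomb)
  have "diag_form a b (\<lambda>p. s * c p + t * d p) = (\<Sum>\<^sub>\<infinity>p. s * ?T b c p + t * ?T b d p)"
    unfolding diag_form_def using b lincomb by (simp add: algebra_simps)
  also have "\<dots> = s * diag_form a b c + t * diag_form a b d"
    unfolding diag_form_def using b c d diag_form_summable[OF assms]
    by (simp add: infsum_add summable_on_cmult_right infsum_cmult_right')
  finally show "diag_form a b (\<lambda>p. s * c p + t * d p) = s * diag_form a b c + t * diag_form a b d" .
  have "diag_form a (\<lambda>p. s * c p + t * d p) b = (\<Sum>\<^sub>\<infinity>p. cnj s * ?T c b p + cnj t * ?T d b p)"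
    unfolding diag_form_def using b lincomb by (simp add: algebra_simps)
  also have "\<dots> = cnj s * diag_form a c b + cnj t * diag_form a d b"
    unfolding diag_form_def using b c d diag_form_summable[OF assms]
    by (simp add: infsum_add summable_on_cmult_right infsum_cmult_right')
  finally show "diag_form a (\<lambda>p. s * c p + t * d p) b = cnj s * diag_form a c b + cnj t * diag_form a d b" .
qed

lemma rapidly_decreasing_sqrt_abs_weight:
  fixes a :: "int \<Rightarrow> real"
  assumes "rapidly_decreasing a"
  shows "rapidly_decreasing (\<lambda>p. sqrt \<bar>a p\<bar> * weight p)"
  unfolding rapidly_decreasing_def
proof
  fix k
  obtain C where C: "\<And>p. weight p ^ (2 * k + 2) * norm (a p) \<le> C"
    using assms unfolding rapidly_decreasing_def by blast
  have "weight p ^ k * norm (sqrt \<bar>a p\<bar> * weight p) = sqrt (weight p ^ (2 * k + 2) * norm (a p))" for p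
    by (simp add: abs_mult real_sqrt_mult power_add power_mult real_sqrt_power)
  then have "weight p ^ k * norm (sqrt \<bar>a p\<bar> * weight p) \<le> sqrt C" for p
    using real_sqrt_le_mono[OF C] by simp
  then show "\<exists>C. \<forall>p. weight p ^ k * norm (sqrt \<bar>a p\<bar> * weight p) \<le> C" by blast
qed

lemma S_bounded_scaled_ebasis:
  fixes r :: "int \<Rightarrow> real"
  assumes "rapidly_decreasing r"
  shows "S_bounded (range (\<lambda>p q. complex_of_real (r p) * ebasis p q))" (is "S_bounded ?B")
proof -
  have bound: "\<exists>C. \<forall>p q. weight q ^ k * norm (complex_of_real (r p) * ebasis p q) \<le> C" for k
  proof -
    obtain C where C: "\<And>p. weight p ^ k * norm (r p) \<le> C"
      using assms unfolding rapidly_decreasing_def by blast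
    have "0 \<le> weight 0 ^ k * norm (r 0)" by simp
    then have "weight q ^ k * norm (complex_of_real (r p) * ebasis p q) \<le> C" for p q
      using C[of p] C[of 0] by (cases "q = p") (simp_all add: ebasis_def)
    then show ?thesis by blast
  qed
  then obtain C where C: "\<And>k p q. weight q ^ k * norm (complex_of_real (r p) * ebasis p q) \<le> C k"
    by metis
  show ?thesis
    unfolding S_bounded_def
  proof (intro conjI allI subsetI)
    show "\<exists>C. \<forall>d\<in>?B. \<forall>q. weight q ^ k * norm (d q) \<le> C" for k
      using C by blast
    show "d \<in> Sspace" if "d \<in> ?B" for d
      using that C unfolding Sspace_def rapidly_decreasing_def by blast
  qed
qed

text \<open>Continuity is witnessed by the bounded set of the sqrt |a_p| (1 + |p|) e_p: on its polar
  |u_p| sqrt |a_p| (1 + |p|) \<le> 1, so the summands are at most 1 / (1 + |p|)^2.\<close>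
lemma diag_form_continuous:
  assumes "rapidly_decreasing a"
  shows "continuous_form (diag_form a)"
proof -
  define r where "r p = sqrt \<bar>a p\<bar> * weight p" for p
  define B where "B = range (\<lambda>p q. complex_of_real (r p) * ebasis p q)"
  have "S_bounded B"
    unfolding B_def r_def using assms by (intro S_bounded_scaled_ebasis rapidly_decreasing_sqrt_abs_weight)
  have polar_bound: "norm (x p) * r p \<le> 1" if "x \<in> polar B" for x p
  proof -
    have "(\<lambda>q. complex_of_real (r p) * ebasis p q) \<in> B" unfolding B_def by blast
    then have "norm (pairing x (\<lambda>q. complex_of_real (r p) * ebasis p q)) \<le> 1"
      using that unfolding polar_def by blast
    moreover have "norm (complex_of_real (r p)) = r p"
      unfolding r_def norm_of_real by simp
    ultimately show ?thesis
      unfolding pairing_scaled_ebasis_right norm_mult by simp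
  qed
  have "norm (diag_form a u v) \<le> 1 * weight_sum" if "u \<in> polar B" "v \<in> polar B" for u v
  proof -
    have "norm (complex_of_real (a p) * (cnj (u p) * v p)) \<le> 1 / weight p ^ 2" for p
    proof -
      have "norm (complex_of_real (a p) * (cnj (u p) * v p)) * weight p ^ 2 = (norm (u p) * r p) * (norm (v p) * r p)"
        unfolding r_def by (simp add: norm_mult power2_eq_square algebra_simps)
      also have "\<dots> \<le> 1 * 1"
        using polar_bound that by (intro mult_mono) (auto simp: r_def)
      finally show ?thesis by (simp add: pos_le_divide_eq)
    qed
    then have "norm (\<Sum>\<^sub>\<infinity>p. complex_of_real (a p) * (cnj (u p) * v p)) \<le> 1 * weight_sum"
      by (rule infsum_weight_bound(2))
    then show ?thesis
      using that unfolding diag_form_def polar_def by simp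
  qed
  with \<open>S_bounded B\<close> show ?thesis unfolding continuous_form_def by blast
qed

lemma diag_form_self:
  assumes "rapidly_decreasing a" "b \<in> Sdual"
  shows "diag_form a b b = complex_of_real (\<Sum>\<^sub>\<infinity>p. a p * norm (b p) ^ 2)"
    and "(\<lambda>p. a p * norm (b p) ^ 2) summable_on UNIV"
proof -
  have summand: "complex_of_real (a p) * (cnj (b p) * b p) = complex_of_real (a p * norm (b p) ^ 2)" for p
    unfolding of_real_mult complex_norm_square by (simp only: mult.commute)
  have "(\<lambda>p. complex_of_real (a p * norm (b p) ^ 2)) summable_on UNIV"
    using diag_form_summable[OF assms(1,2,2)] by (simp only: summand)
  from summable_on_Re[OF this] show summable: "(\<lambda>p. a p * norm (b p) ^ 2) summable_on UNIV"
    by simp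
  have "(\<Sum>\<^sub>\<infinity>p. complex_of_real (a p * norm (b p) ^ 2)) = complex_of_real (\<Sum>\<^sub>\<infinity>p. a p * norm (b p) ^ 2)"
    by (rule infsumI[OF has_sum_of_real[OF has_sum_infsum[OF summable]]])
  then show "diag_form a b b = complex_of_real (\<Sum>\<^sub>\<infinity>p. a p * norm (b p) ^ 2)"
    unfolding diag_form_def summand using assms(2) by simp
qed

lemma diag_form_pos_semidef:
  assumes "rapidly_decreasing a" "\<And>p. a p \<ge> 0"
  shows "pos_semidef (diag_form a)"
  unfolding pos_semidef_def
  using diag_form_self[OF assms(1)] assms(2) by (simp add: infsum_nonneg)

lemma diag_form_pos_def:
  assumes "rapidly_decreasing a" "\<And>p. a p > 0"
  shows "pos_def (diag_form a)"
  unfolding pos_def_def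
proof (intro ballI impI)
  fix b assume "b \<in> Sdual" "b \<noteq> (\<lambda>_. 0)"
  then obtain p where "b p \<noteq> 0" by auto
  then have "0 < (\<Sum>q\<in>{p}. a q * norm (b q) ^ 2)"
    using assms(2)[of p] by simp
  also have "\<dots> \<le> (\<Sum>\<^sub>\<infinity>q. a q * norm (b q) ^ 2)"
    using diag_form_self(2)[OF assms(1) \<open>b \<in> Sdual\<close>] less_imp_le[OF assms(2)]
    by (intro finite_sum_le_infsum) auto
  finally show "Im (diag_form a b b) = 0 \<and> Re (diag_form a b b) > 0"
    using diag_form_self(1)[OF assms(1) \<open>b \<in> Sdual\<close>] by simp
qed

lemma diag_form_invariant:
  assumes "\<And>p. a (- p) = a p"
  shows "invariant_form (diag_form a)"
  unfolding invariant_form_def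
proof (intro conjI allI impI ballI)
  fix z :: complex and b c assume "norm z = 1" "b \<in> Sdual" "c \<in> Sdual"
  have "cnj (rot z b p) * rot z c p = cnj (b p) * c p" for p
  proof -
    have "cnj (z powi (- p)) * z powi (- p) = complex_of_real (norm (z powi (- p)) ^ 2)"
      by (simp only: complex_norm_square mult.commute)
    also have "norm (z powi (- p)) = 1"
      using \<open>norm z = 1\<close> by (simp add: norm_power_int)
    finally have "cnj (z powi (- p)) * z powi (- p) = 1"
      by simp
    then show ?thesis
      unfolding rot_def by (simp add: algebra_simps)
  qed
  then show "diag_form a (rot z b) (rot z c) = diag_form a b c"
    unfolding diag_form_def
    using rot_in_Sdual[OF \<open>norm z = 1\<close>] \<open>b \<in> Sdual\<close> \<open>c \<in> Sdual\<close> by simp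
next
  fix b c assume "b \<in> Sdual" "c \<in> Sdual"
  let ?g = "\<lambda>p. complex_of_real (a p) * (cnj (b p) * c p)"
  have "(\<Sum>\<^sub>\<infinity>p. complex_of_real (a p) * (cnj (reversal b p) * reversal c p)) = (\<Sum>\<^sub>\<infinity>p. (?g \<circ> uminus) p)"
    unfolding reversal_def o_def using assms by simp
  also have "\<dots> = (\<Sum>\<^sub>\<infinity>p \<in> range uminus. ?g p)"
    by (rule infsum_reindex[symmetric]) simp
  also have "range uminus = (UNIV :: int set)"
    by (rule surj_uminus)
  finally show "diag_form a (reversal b) (reversal c) = diag_form a b c"
    unfolding diag_form_def using reversal_in_Sdual \<open>b \<in> Sdual\<close> \<open>c \<in> Sdual\<close> by simp
qed

lemma diag_map_diag_form: "diag_map (diag_form a) = a"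
proof
  fix p
  have "diag_form a (ebasis p) (ebasis p) = complex_of_real (a p)"
    unfolding diag_form_def using ebasis_in_Sdual
    by (simp, subst infsum_single_point[where p = p]) (auto simp: ebasis_def)
  then show "diag_map (diag_form a) p = a p"
    unfolding diag_map_def by simp
qed

lemma diag_form_in_coneC: "a \<in> coneT \<Longrightarrow> diag_form a \<in> coneC"
  unfolding coneT_def coneC_def
  by (auto intro: diag_form_sesquilinear diag_form_continuous diag_form_pos_semidef diag_form_invariant)

lemma diag_form_in_coneC_plus: "a \<in> coneT_plus \<Longrightarrow> diag_form a \<in> coneC_plus"
  unfolding coneT_plus_def coneC_plus_def
  using diag_form_in_coneC diag_form_pos_def coneT_def by auto

lemma inj_on_diag_map: "inj_on diag_map coneC"
proof (rule inj_onI)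
  fix f g assume f: "f \<in> coneC" and g: "g \<in> coneC" and "diag_map f = diag_map g"
  have diag_real: "h (ebasis p) (ebasis p) = complex_of_real (diag_map h p)" if "h \<in> coneC" for h p
    using that ebasis_in_Sdual unfolding coneC_def pos_semidef_def diag_map_def
    by (simp add: complex_eq_iff)
  have "f (ebasis p) (ebasis p) = g (ebasis p) (ebasis p)" for p
    unfolding diag_real[OF f] diag_real[OF g] \<open>diag_map f = diag_map g\<close> ..
  with f g show "f = g"
    unfolding coneC_def by (intro invariant_continuous_form_eqI) auto
qed

theorem mainTheorem16:
  shows "bij_betw diag_map coneC coneT \<and> bij_betw diag_map coneC_plus coneT_plus \<and>
         (\<forall>f\<in>coneC. \<forall>g\<in>coneC. \<forall>t::real. t \<ge> 0 \<longrightarrow>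
            diag_map (\<lambda>b c. f b c + complex_of_real t * g b c) = (\<lambda>p. diag_map f p + t * diag_map g p))"
proof (intro conjI ballI allI impI)
  have "coneT \<subseteq> diag_map ` coneC" "coneT_plus \<subseteq> diag_map ` coneC_plus"
    using diag_form_in_coneC diag_form_in_coneC_plus diag_map_diag_form by (metis image_eqI subsetI)+
  moreover have "inj_on diag_map coneC_plus"
    using inj_on_diag_map by (rule inj_on_subset) (auto simp: coneC_plus_def)
  ultimately show "bij_betw diag_map coneC coneT" "bij_betw diag_map coneC_plus coneT_plus"
    unfolding bij_betw_def using inj_on_diag_map diag_map_in_coneT diag_map_in_coneT_plus by blast+
next
  fix f g and t :: real
  show "diag_map (\<lambda>b c. f b c + complex_of_real t * g b c) = (\<lambda>p. diag_map f p + t * diag_map g p)"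
    unfolding diag_map_def by simp
qed

end
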